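(* Let $\mathbf{x}\in\Delta^0$. Then: (1) for every $\tilde{\mathbf{x}}\in\mathcal{P}(\mathbf{x})\cap\Delta^0$ we have $f(\tilde{\mathbf{x}})=f(\mathbf{x})$; (2) for every nonzero $\mathbf{d}\in\mathbb{R}^n$ such that $\mathbf{x}+t\mathbf{d}\in\Delta^0$ for all sufficiently small $t>0$, we have $\mathbf{d}^{\mathsf T}\nabla^2 f(\mathbf{x})\mathbf{d}<0$.
   Context: Let $G=(\mathcal{V},\mathcal{E})$ be a simple undirected graph on vertex set $\mathcal{V}=\{1,\dots,n\}$ with adjacency matrix $\mathbf{A}=(a_{ij})$ ($a_{ij}=1$ if $(i,j)\in\mathcal{E}$, else $0$; $a_{ii}=0$). A clique is a subset $C\subseteq\mathcal{V}$ with $(i,j)\in\mathcal{E}$ for all distinct $i,j\in C$. Let $\Delta=\{\mathbf{x}\in\mathbb{R}^n:\mathbf{0}\le\mathbf{x}\le\mathbf{1},\ \mathbf{1}^{\mathsf T}\mathbf{x}=1\}$. For $\mathbf{x}\in\mathbb{R}^n$, $\mathrm{supp}(\mathbf{x})=\{i:x_i\neq0\}$. Let $\Delta^0=\{\mathbf{x}\in\Delta:\mathrm{supp}(\mathbf{x})\text{ is a clique}\}$. For $\mathbf{x}\in\Delta$, $\mathcal{P}(\mathbf{x})=\{\tilde{\mathbf{x}}\in\Delta:\exists$ a permutation $\sigma$ of $\{1,\dots,n\}$ with $\tilde x_i=x_{\sigma(i)}$ for all $i\}$. Let $\Phi:X\to\mathbb{R}$ be twice continuously differentiable on an open set $X\supset\Delta$,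 satisfying for every $\mathbf{x}\in\Delta$: (C1) $\nabla^2\Phi(\mathbf{x})$ is positive semidefinite; (C2) $\|\nabla^2\Phi(\mathbf{x})\|_2<2$ (spectral norm); (C3) $\Phi$ is constant on $\mathcal{P}(\mathbf{x})$. Define $f(\mathbf{x})=\mathbf{x}^{\mathsf T}\mathbf{A}\mathbf{x}+\Phi(\mathbf{x})$. *)

theory Defs
  imports "HOL-Analysis.Analysis"
begin

definition std_simplex :: "(real^'n) set" where
  "std_simplex = {x. (\<forall>i. 0 \<le> x$i \<and> x$i \<le> 1) \<and> (\<Sum>i\<in>UNIV. x$i) = 1}"

definition supp :: "real^'n \<Rightarrow> 'n set" where
  "supp x = {i. x$i \<noteq> 0}"

definition is_clique :: "('n \<Rightarrow> 'n \<Rightarrow> bool) \<Rightarrow> 'n set \<Rightarrow> bool" where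
  "is_clique E C \<longleftrightarrow> (\<forall>i\<in>C. \<forall>j\<in>C. i \<noteq> j \<longrightarrow> E i j)"

definition std_simplex0 :: "('n \<Rightarrow> 'n \<Rightarrow> bool) \<Rightarrow> (real^'n) set" where
  "std_simplex0 E = {x \<in> std_simplex. is_clique E (supp x)}"

definition perms :: "real^'n \<Rightarrow> (real^'n) set" where
  "perms x = {y \<in> std_simplex. \<exists>\<sigma>. \<sigma> permutes (UNIV::'n set) \<and> (\<forall>i. y$i = x$(\<sigma> i))}"

definition adj :: "('n \<Rightarrow> 'n \<Rightarrow> bool) \<Rightarrow> real^'n^'n" where
  "adj E = (\<chi> i j. if E i j then 1 else 0)"

definition is_hessian :: "(real^'n \<Rightarrow> real) \<Rightarrow> real^'n \<Rightarrow> real^'n^'n \<Rightarrow> bool" where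
  "is_hessian f x H \<longleftrightarrow> (\<exists>g e. e > 0 \<and>
      (\<forall>y\<in>ball x e. (f has_derivative (\<lambda>h. g y \<bullet> h)) (at y)) \<and>
      (g has_derivative (\<lambda>h. H *v h)) (at x))"

end

theory Submission
  imports Defs
begin

text \<open>On a point whose support is a clique, the quadratic form of the adjacency matrix sees
  every pair of distinct support vertices, so it equals \<open>(\<Sum>i. y\<^sub>i)\<^sup>2 - \<Sum>i. y\<^sub>i\<^sup>2\<close>. On \<open>\<Delta>\<^sup>0\<close> this
  depends only on the multiset of coordinates, which gives invariance under permutations.
  A feasible direction \<open>d\<close> at \<open>x \<in> \<Delta>\<^sup>0\<close> has coordinate sum \<open>0\<close> and clique support, so the
  same identity gives \<open>d\<^sup>T A d = -\<parallel>d\<parallel>\<^sup>2\<close>; the Hessian of \<open>f\<close> is \<open>2A + \<nabla>\<^sup>2\<Phi>\<close>, and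
  \<open>\<parallel>\<nabla>\<^sup>2\<Phi>\<parallel> < 2\<close> makes the curvature along \<open>d\<close> negative.\<close>

lemma quadratic_form_adj_clique:
  fixes E :: "'n::finite \<Rightarrow> 'n \<Rightarrow> bool" and y :: "real^'n"
  assumes irrefl: "\<And>i. \<not> E i i" and clique: "is_clique E (supp y)"
  shows "y \<bullet> (adj E *v y) = (\<Sum>i\<in>UNIV. y$i)\<^sup>2 - (\<Sum>i\<in>UNIV. (y$i)\<^sup>2)"
proof -
  have entry: "y$i * (adj E $i$j * y$j) = (if i = j then 0 else y$i * y$j)" for i j
  proof (cases "y$i = 0 \<or> y$j = 0")
    case False
    then have "i \<in> supp y" "j \<in> supp y" by (auto simp: supp_def)
    then show ?thesis using clique irrefl unfolding is_clique_def adj_def by auto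
  qed auto
  have "y \<bullet> (adj E *v y) = (\<Sum>i\<in>UNIV. \<Sum>j\<in>UNIV. y$i * (adj E $i$j * y$j))"
    by (simp add: inner_vec_def matrix_vector_mult_def sum_distrib_left)
  also have "\<dots> = (\<Sum>i\<in>UNIV. \<Sum>j\<in>UNIV. y$i * y$j - (if i = j then y$i * y$j else 0))"
    by (simp add: entry if_distrib cong: if_cong)
  also have "\<dots> = (\<Sum>i\<in>UNIV. y$i)\<^sup>2 - (\<Sum>i\<in>UNIV. (y$i)\<^sup>2)"
    by (simp add: sum_subtractf power2_eq_square sum_product)
  finally show ?thesis .
qed

lemma quadratic_form_adj_clique_sum_zero:
  fixes E :: "'n::finite \<Rightarrow> 'n \<Rightarrow> bool" and d :: "real^'n"
  assumes "\<And>i. \<not> E i i" and "is_clique E (supp d)" and "(\<Sum>i\<in>UNIV. d$i) = 0"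
  shows "d \<bullet> (adj E *v d) = - (norm d)\<^sup>2"
proof -
  have "(norm d)\<^sup>2 = (\<Sum>i\<in>UNIV. (d$i)\<^sup>2)"
    by (simp only: power2_norm_eq_inner) (simp add: inner_vec_def power2_eq_square)
  then show ?thesis using quadratic_form_adj_clique[OF assms(1,2)] assms(3) by simp
qed

lemma quadratic_form_adj_perms:
  fixes E :: "'n::finite \<Rightarrow> 'n \<Rightarrow> bool"
  assumes irrefl: "\<And>i. \<not> E i i" and x: "x \<in> std_simplex0 E"
    and z: "z \<in> perms x \<inter> std_simplex0 E"
  shows "z \<bullet> (adj E *v z) = x \<bullet> (adj E *v x)"
proof -
  obtain \<sigma> where \<sigma>: "\<sigma> permutes (UNIV::'n set)" "\<And>i. z$i = x$(\<sigma> i)"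
    using z by (auto simp: perms_def)
  have "(\<Sum>i\<in>UNIV. (z$i)\<^sup>2) = (\<Sum>i\<in>UNIV. (x$i)\<^sup>2)"
    using sum.permute[OF \<sigma>(1), of "\<lambda>i. (x$i)\<^sup>2"] by (simp add: \<sigma>(2))
  moreover have "(\<Sum>i\<in>UNIV. z$i) = (\<Sum>i\<in>UNIV. x$i)"
    using x z by (simp add: std_simplex0_def std_simplex_def)
  ultimately show ?thesis
    using x z by (simp add: quadratic_form_adj_clique[OF irrefl] std_simplex0_def)
qed

lemma feasible_direction_sum_zero:
  fixes x d :: "real^'n::finite"
  assumes "x \<in> std_simplex" and "x + t *\<^sub>R d \<in> std_simplex" and "t \<noteq> 0"
  shows "(\<Sum>i\<in>UNIV. d$i) = 0"
proof -
  have "(\<Sum>i\<in>UNIV. x$i) + t * (\<Sum>i\<in>UNIV. d$i) = (\<Sum>i\<in>UNIV. x$i + t * d$i)"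
    by (simp add: sum.distrib sum_distrib_left)
  then show ?thesis using assms by (simp add: std_simplex_def)
qed

lemma feasible_direction_supp_clique:
  fixes x d :: "real^'n::finite"
  assumes "\<epsilon> > 0" and feasible: "\<And>t. 0 < t \<Longrightarrow> t < \<epsilon> \<Longrightarrow> is_clique E (supp (x + t *\<^sub>R d))"
  shows "is_clique E (supp d)"
  unfolding is_clique_def
proof (intro ballI impI)
  fix i j assume "i \<in> supp d" "j \<in> supp d" "i \<noteq> j"
  then have di: "d$i \<noteq> 0" and dj: "d$j \<noteq> 0" by (auto simp: supp_def)
  text \<open>Each coordinate with \<open>d\<^sub>k \<noteq> 0\<close> vanishes for at most one \<open>t\<close>, so among three values
    of \<open>t\<close> one keeps both \<open>i\<close> and \<open>j\<close> in the support.\<close>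
  have zero_unique: "t = s" if "x$k + t * d$k = 0" "x$k + s * d$k = 0" "d$k \<noteq> 0" for k t s
    using that by (metis add_left_cancel mult_right_cancel)
  have "\<exists>t\<in>{\<epsilon>/2, \<epsilon>/3, \<epsilon>/4}. x$i + t * d$i \<noteq> 0 \<and> x$j + t * d$j \<noteq> 0"
  proof (rule ccontr)
    assume "\<not> ?thesis"
    then have "x$i + (\<epsilon>/2) * d$i = 0 \<or> x$j + (\<epsilon>/2) * d$j = 0"
      and "x$i + (\<epsilon>/3) * d$i = 0 \<or> x$j + (\<epsilon>/3) * d$j = 0"
      and "x$i + (\<epsilon>/4) * d$i = 0 \<or> x$j + (\<epsilon>/4) * d$j = 0" by auto
    moreover have "\<epsilon>/2 \<noteq> \<epsilon>/3" "\<epsilon>/2 \<noteq> \<epsilon>/4" "\<epsilon>/3 \<noteq> \<epsilon>/4" using \<open>\<epsilon> > 0\<close> by auto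
    ultimately show False using zero_unique[OF _ _ di] zero_unique[OF _ _ dj] by metis
  qed
  then obtain t where t: "t \<in> {\<epsilon>/2, \<epsilon>/3, \<epsilon>/4}"
    and "x$i + t * d$i \<noteq> 0" "x$j + t * d$j \<noteq> 0" by blast
  then have "i \<in> supp (x + t *\<^sub>R d)" "j \<in> supp (x + t *\<^sub>R d)" by (simp_all add: supp_def)
  moreover have "0 < t" "t < \<epsilon>" using t \<open>\<epsilon> > 0\<close> by auto
  ultimately show "E i j" using feasible \<open>i \<noteq> j\<close> by (auto simp: is_clique_def)
qed

lemma adj_symmetric:
  assumes "\<And>i j. E i j \<Longrightarrow> E j i"
  shows "transpose (adj E) = adj E"
  by (auto simp: vec_eq_iff transpose_def adj_def intro: assms)

lemma has_derivative_quadratic_form: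
  fixes A :: "real^'n::finite^'n"
  assumes "transpose A = A"
  shows "((\<lambda>y. y \<bullet> (A *v y)) has_derivative (\<lambda>h. (2 *\<^sub>R (A *v y)) \<bullet> h)) (at y)"
proof -
  have "((\<lambda>y. y \<bullet> (A *v y)) has_derivative (\<lambda>h. y \<bullet> (A *v h) + h \<bullet> (A *v y))) (at y)"
    by (intro has_derivative_inner has_derivative_ident
        bounded_linear.has_derivative[OF matrix_vector_mul_bounded_linear])
  moreover have "y \<bullet> (A *v h) = (A *v y) \<bullet> h" for h
    using assms by (metis dot_lmul_matrix inner_commute vector_transpose_matrix)
  ultimately show ?thesis by (simp add: inner_commute)
qed

lemma is_hessian_imp_derivative_gradient:
  fixes f :: "real^'n::finite \<Rightarrow> real"
  assumes "open X" "x \<in> X"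
    and grad: "\<And>y. y \<in> X \<Longrightarrow> (f has_derivative (\<lambda>h. G y \<bullet> h)) (at y)"
    and "(G has_derivative L) (at x)"
    and "is_hessian f x H"
  shows "(\<lambda>h. H *v h) = L"
proof -
  obtain g e where "e > 0" and g: "\<And>y. y \<in> ball x e \<Longrightarrow> (f has_derivative (\<lambda>h. g y \<bullet> h)) (at y)"
    and g_deriv: "(g has_derivative (\<lambda>h. H *v h)) (at x)"
    using assms(5) unfolding is_hessian_def by blast
  have "g y = G y" if "y \<in> ball x e \<inter> X" for y
  proof -
    have "(\<lambda>h. g y \<bullet> h) = (\<lambda>h. G y \<bullet> h)"
      using has_derivative_unique[OF g grad] that by auto
    then have "(g y - G y) \<bullet> (g y - G y) = 0"
      by (metis inner_diff_left right_minus_eq)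
    then show ?thesis by simp
  qed
  then have "(G has_derivative (\<lambda>h. H *v h)) (at x)"
    using has_derivative_transform_within_open[OF g_deriv, of "ball x e \<inter> X" G]
      \<open>e > 0\<close> assms(1,2) by auto
  then show ?thesis using has_derivative_unique assms(4) by blast
qed

lemma is_hessian_quadratic_form_plus:
  fixes A :: "real^'n::finite^'n" and \<Phi> :: "real^'n \<Rightarrow> real"
  assumes "transpose A = A" and "open X" and "x \<in> X"
    and grad: "\<And>y. y \<in> X \<Longrightarrow> (\<Phi> has_derivative (\<lambda>h. grad\<Phi> y \<bullet> h)) (at y)"
    and hess: "\<And>y. y \<in> X \<Longrightarrow> (grad\<Phi> has_derivative (\<lambda>h. H\<Phi> y *v h)) (at y)"
    and "is_hessian (\<lambda>y. y \<bullet> (A *v y) + \<Phi> y) x H"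
  shows "H *v h = 2 *\<^sub>R (A *v h) + H\<Phi> x *v h"
proof -
  define G where "G y = 2 *\<^sub>R (A *v y) + grad\<Phi> y" for y
  have "((\<lambda>y. y \<bullet> (A *v y) + \<Phi> y) has_derivative (\<lambda>h. G y \<bullet> h)) (at y)" if "y \<in> X" for y
    unfolding G_def inner_add_left
    by (intro has_derivative_add has_derivative_quadratic_form assms(1) grad that)
  moreover have "(G has_derivative (\<lambda>h. 2 *\<^sub>R (A *v h) + H\<Phi> x *v h)) (at x)"
    unfolding G_def
    by (intro has_derivative_add has_derivative_scaleR_right hess \<open>x \<in> X\<close> has_derivative_ident
        bounded_linear.has_derivative[OF matrix_vector_mul_bounded_linear])
  ultimately have "(\<lambda>h. H *v h) = (\<lambda>h. 2 *\<^sub>R (A *v h) + H\<Phi> x *v h)"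
    using is_hessian_imp_derivative_gradient[OF \<open>open X\<close> \<open>x \<in> X\<close>] assms(6) by blast
  then show ?thesis by (simp add: fun_eq_iff)
qed

lemma quadratic_form_le_onorm:
  fixes M :: "real^'n::finite^'n"
  shows "v \<bullet> (M *v v) \<le> onorm (\<lambda>v. M *v v) * (norm v)\<^sup>2"
proof -
  have "v \<bullet> (M *v v) \<le> norm v * norm (M *v v)"
    by (metis Cauchy_Schwarz_ineq2 abs_le_iff)
  also have "\<dots> \<le> norm v * (onorm (\<lambda>v. M *v v) * norm v)"
    by (intro mult_left_mono onorm[OF matrix_vector_mul_bounded_linear]) auto
  finally show ?thesis by (simp add: power2_eq_square mult_ac)
qed

theorem lemma1:
  fixes E :: "'n::finite \<Rightarrow> 'n \<Rightarrow> bool"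
    and \<Phi> :: "real^'n \<Rightarrow> real"
    and grad\<Phi> :: "real^'n \<Rightarrow> real^'n"
    and H\<Phi> :: "real^'n \<Rightarrow> real^'n^'n"
    and X :: "(real^'n) set"
    and f :: "real^'n \<Rightarrow> real"
    and x :: "real^'n"
  assumes sym: "\<And>i j. E i j \<Longrightarrow> E j i"
    and irrefl: "\<And>i. \<not> E i i"
    and X_open: "open X"
    and X_sup: "std_simplex \<subseteq> X"
    and grad: "\<And>y. y \<in> X \<Longrightarrow> (\<Phi> has_derivative (\<lambda>h. grad\<Phi> y \<bullet> h)) (at y)"
    and hess: "\<And>y. y \<in> X \<Longrightarrow> (grad\<Phi> has_derivative (\<lambda>h. H\<Phi> y *v h)) (at y)"
    and hess_cont: "continuous_on X H\<Phi>"
    and C1: "\<And>y v. y \<in> std_simplex \<Longrightarrow> v \<bullet> (H\<Phi> y *v v) \<ge> 0"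
    and C2: "\<And>y. y \<in> std_simplex \<Longrightarrow> onorm (\<lambda>v. H\<Phi> y *v v) < 2"
    and C3: "\<And>y z. y \<in> std_simplex \<Longrightarrow> z \<in> perms y \<Longrightarrow> \<Phi> z = \<Phi> y"
    and f_def: "\<And>y. f y = y \<bullet> (adj E *v y) + \<Phi> y"
    and x: "x \<in> std_simplex0 E"
  shows "(\<forall>z \<in> perms x \<inter> std_simplex0 E. f z = f x) \<and>
         (\<forall>d. d \<noteq> 0 \<and> (\<exists>\<epsilon>>0. \<forall>t. 0 < t \<and> t < \<epsilon> \<longrightarrow> x + t *\<^sub>R d \<in> std_simplex0 E) \<longrightarrow>
              (\<forall>H. is_hessian f x H \<longrightarrow> d \<bullet> (H *v d) < 0))"
proof (intro conjI ballI allI impI)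
  have xS: "x \<in> std_simplex" and xX: "x \<in> X" using x X_sup by (auto simp: std_simplex0_def)
  show "f z = f x" if "z \<in> perms x \<inter> std_simplex0 E" for z
    using that C3[OF xS] quadratic_form_adj_perms[OF irrefl x that] by (simp add: f_def)
  fix d H
  assume "d \<noteq> 0 \<and> (\<exists>\<epsilon>>0. \<forall>t. 0 < t \<and> t < \<epsilon> \<longrightarrow> x + t *\<^sub>R d \<in> std_simplex0 E)"
    and "is_hessian f x H"
  then obtain \<epsilon> where "d \<noteq> 0" "\<epsilon> > 0"
    and feasible: "\<And>t. 0 < t \<Longrightarrow> t < \<epsilon> \<Longrightarrow> x + t *\<^sub>R d \<in> std_simplex0 E" by blast
  have "is_clique E (supp d)"
    using feasible_direction_supp_clique[OF \<open>\<epsilon> > 0\<close>, of E x d] feasible by (simp add: std_simplex0_def)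
  moreover have "(\<Sum>i\<in>UNIV. d$i) = 0"
    using feasible_direction_sum_zero[OF xS, of "\<epsilon>/2"] feasible[of "\<epsilon>/2"] \<open>\<epsilon> > 0\<close>
    by (simp add: std_simplex0_def)
  ultimately have curvature_adj: "d \<bullet> (adj E *v d) = - (norm d)\<^sup>2"
    by (rule quadratic_form_adj_clique_sum_zero[OF irrefl])
  have "f = (\<lambda>y. y \<bullet> (adj E *v y) + \<Phi> y)" using f_def by blast
  then have "H *v d = 2 *\<^sub>R (adj E *v d) + H\<Phi> x *v d"
    using is_hessian_quadratic_form_plus[OF adj_symmetric[OF sym] X_open xX grad hess]
      \<open>is_hessian f x H\<close> by simp
  then have "d \<bullet> (H *v d) = - 2 * (norm d)\<^sup>2 + d \<bullet> (H\<Phi> x *v d)"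
    by (simp add: inner_add_right curvature_adj)
  also have "\<dots> \<le> - 2 * (norm d)\<^sup>2 + onorm (\<lambda>v. H\<Phi> x *v v) * (norm d)\<^sup>2"
    using quadratic_form_le_onorm by simp
  also have "\<dots> < 0"
    using C2[OF xS] \<open>d \<noteq> 0\<close> by (simp add: algebra_simps)
  finally show "d \<bullet> (H *v d) < 0" .
qed

end
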